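(* Let $\mathbb{L}^2$ be as described in the context. Every non-constant geodesic of $\mathbb{L}^2$ has, modulo reparametrization, one of the following forms, for some $\alpha,\beta\in\mathbb{R}$, $c>0$ and choice of sign $\pm$: (1) $\sigma(t)=(e^t,\alpha)$ for $-\infty<t<\infty$; this geodesic is complete. (2) $\sigma(t)=(t^{-1},\pm t^{-1}+\alpha)$ for $0<t<\infty$; this geodesic is incomplete at one end and complete at the other end. (3) $\sigma(t)=\left(\frac{1}{c\sinh(t)},\pm\frac{\coth(t)}{c}+\beta\right)$ for $t\in(0,\infty)$. This tends asymptotically to the line $x^1=0$ as $t\to\infty$ and escapes to the right ($x^1\to\infty$) as $t\to0$. These geodesics are incomplete at one end and complete at the other; they all have infinite (and negative) length. (4) $\sigma(t)=\left(\frac{1}{c\sin(t)},\pm\frac{\cot(t)}{c}+\beta\right)$ for $t\in(0,\pi)$. These escape upwards and to the right as $t\to0$ and downwards and to the right as $t\to\pi$; such a geodesic is incomplete at both ends and has total length $\pi$. (5) The geodesics in (3) and (4) solve an equation of the form $(x^1)^2-\frac{\lambda}{c^2}=(x^2+\beta)^2$ (for suitable $\beta\in\mathbb{R}$) and are hyperbolas; here $\lambda=+1$ for the "vertical" geodesics of (4), $\lambda=-1$ for the "horizontal" geodesics of (3), while $\lambda=0$ corresponds to the null geodesics.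
   Context: $\mathbb{L}^2$ is $\mathbb{R}^+\times\mathbb{R}=\{(x^1,x^2):x^1>0\}$ with the torsion free connection whose nonzero Christoffel symbols (with $\nabla_{\partial_{x^i}}\partial_{x^j}=\Gamma_{ij}{}^k\partial_{x^k}$) are $\Gamma_{11}{}^1=-\frac1{x^1}$, $\Gamma_{12}{}^2=\Gamma_{21}{}^2=-\frac1{x^1}$, $\Gamma_{22}{}^1=-\frac1{x^1}$. This is the Levi--Civita connection of the Lorentzian metric $g=(x^1)^{-2}\operatorname{diag}(-1,1)$ (its symmetric Ricci tensor), and lengths are measured with respect to $g$. A geodesic is complete at an end if it is defined for all parameter values in that direction. *)

theory Defs
  imports "HOL-Analysis.Analysis"
begin

definition L2 :: "(real \<times> real) set" where
  "L2 = {p. fst p > 0}"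

definition coord :: "real \<times> real \<Rightarrow> nat \<Rightarrow> real" where
  "coord p i = (if i = 1 then fst p else snd p)"

definition Chr :: "nat \<Rightarrow> nat \<Rightarrow> nat \<Rightarrow> real \<times> real \<Rightarrow> real" where
  "Chr i j k p =
     (if (i, j, k) \<in> {(1,1,1), (1,2,2), (2,1,2), (2,2,1)} then - 1 / fst p else 0)"

definition geodesic_eq :: "real \<times> real \<Rightarrow> real \<times> real \<Rightarrow> real \<times> real \<Rightarrow> bool" where
  "geodesic_eq p v a \<longleftrightarrow>
     (\<forall>k\<in>{1,2}. coord a k + (\<Sum>i\<in>{1,2}. \<Sum>j\<in>{1,2}. Chr i j k p * coord v i * coord v j) = 0)"

definition is_geodesic :: "real set \<Rightarrow> (real \<Rightarrow> real \<times> real) \<Rightarrow> bool" where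
  "is_geodesic I \<gamma> \<longleftrightarrow> open I \<and> is_interval I \<and> I \<noteq> {} \<and> (\<forall>t\<in>I. \<gamma> t \<in> L2) \<and>
     (\<exists>\<gamma>' \<gamma>''. \<forall>t\<in>I. (\<gamma> has_vector_derivative \<gamma>' t) (at t) \<and>
                     (\<gamma>' has_vector_derivative \<gamma>'' t) (at t) \<and>
                     geodesic_eq (\<gamma> t) (\<gamma>' t) (\<gamma>'' t))"

definition maximal_geodesic :: "real set \<Rightarrow> (real \<Rightarrow> real \<times> real) \<Rightarrow> bool" where
  "maximal_geodesic I \<sigma> \<longleftrightarrow> is_geodesic I \<sigma> \<and>
     (\<forall>J \<gamma>. is_geodesic J \<gamma> \<and> I \<subseteq> J \<and> (\<forall>t\<in>I. \<gamma> t = \<sigma> t) \<longrightarrow> J = I)"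

definition complete_at_top :: "real set \<Rightarrow> bool" where
  "complete_at_top I \<longleftrightarrow> (\<forall>T. \<exists>t\<in>I. t \<ge> T)"

definition complete_at_bot :: "real set \<Rightarrow> bool" where
  "complete_at_bot I \<longleftrightarrow> (\<forall>T. \<exists>t\<in>I. t \<le> T)"

definition metric_g :: "real \<times> real \<Rightarrow> real \<times> real \<Rightarrow> real \<times> real \<Rightarrow> real" where
  "metric_g p v w = (- fst v * fst w + snd v * snd w) / (fst p)\<^sup>2"

definition len_density :: "(real \<Rightarrow> real \<times> real) \<Rightarrow> real \<Rightarrow> real" where
  "len_density \<sigma> t =
     (let q = metric_g (\<sigma> t) (vector_derivative \<sigma> (at t)) (vector_derivative \<sigma> (at t))
      in sgn q * sqrt \<bar>q\<bar>)"

definition sigma1 :: "real \<Rightarrow> real \<Rightarrow> real \<times> real" where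
  "sigma1 \<alpha> t = (exp t, \<alpha>)"

definition sigma2 :: "real \<Rightarrow> real \<Rightarrow> real \<Rightarrow> real \<times> real" where
  "sigma2 s \<alpha> t = (1 / t, s / t + \<alpha>)"

definition sigma3 :: "real \<Rightarrow> real \<Rightarrow> real \<Rightarrow> real \<Rightarrow> real \<times> real" where
  "sigma3 s c \<beta> t = (1 / (c * sinh t), s * (cosh t / sinh t) / c + \<beta>)"

definition sigma4 :: "real \<Rightarrow> real \<Rightarrow> real \<Rightarrow> real \<Rightarrow> real \<times> real" where
  "sigma4 s c \<beta> t = (1 / (c * sin t), s * cot t / c + \<beta>)"

end

theory Submission
  imports Defs "HOL-Real_Asymp.Real_Asymp"
begin

(*
  Write a geodesic as t \<mapsto> (x, y) with x = x^1 > 0. The momentum K = y'/x^2 = g(v, d/dy) of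
  the Killing field d/dy and the energy E = (y'^2 - x'^2)/x^2 = g(v, v) are conserved. If K = 0,
  then y is constant and x'' = x'^2/x, so x is an exponential. If K \<noteq> 0, the reciprocal
  u = 1/x solves the harmonic oscillator u'' = -E u with u'^2 + E u^2 = K^2, so u is affine
  (E = 0), a multiple of sinh (E < 0) or of sin (E > 0), and since (u'/u)' = -K^2/u^2 we get
  y = \<beta> - u'/(K u). Conversely each such curve solves the
  geodesic equations, has energy E and lies on the conic x^2 - E/K^2 = (y - \<beta>)^2, and it is
  maximal because x blows up at every finite end of its interval.
*)

lemma DERIV_zero_imp_constant_on:
  fixes f :: "real \<Rightarrow> real"
  assumes "convex I" "t0 \<in> I" "\<And>t. t \<in> I \<Longrightarrow> (f has_real_derivative 0) (at t)"
  shows "\<forall>t\<in>I. f t = f t0"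
proof -
  obtain c where "\<forall>t\<in>I. f t = c"
    using has_field_derivative_zero_constant[OF assms(1)] assms(3)
    by (meson has_field_derivative_at_within)
  thus ?thesis using assms(2) by auto
qed

lemma harmonic_ode_zero_unique:
  fixes w w' :: "real \<Rightarrow> real"
  assumes I: "convex I" "t0 \<in> I"
    and ode: "\<And>t. t \<in> I \<Longrightarrow>
      (w has_real_derivative w' t) (at t) \<and> (w' has_real_derivative - E * w t) (at t)"
    and init: "w t0 = 0" "w' t0 = 0"
  shows "\<forall>t\<in>I. w t = 0 \<and> w' t = 0"
proof (cases E "0 :: real" rule: linorder_cases)
  case greater
  have "\<forall>t\<in>I. (w' t)\<^sup>2 + E * (w t)\<^sup>2 = (w' t0)\<^sup>2 + E * (w t0)\<^sup>2"
  proof (rule DERIV_zero_imp_constant_on[OF I])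
    fix t assume "t \<in> I"
    with ode[of t] show "((\<lambda>t. (w' t)\<^sup>2 + E * (w t)\<^sup>2) has_real_derivative 0) (at t)"
      by (auto intro!: derivative_eq_intros simp: algebra_simps)
  qed
  with init greater show ?thesis by (auto simp: add_nonneg_eq_0_iff)
next
  case equal
  have "\<forall>t\<in>I. w' t = w' t0"
    by (rule DERIV_zero_imp_constant_on[OF I]) (use ode equal in auto)
  moreover from this have "\<forall>t\<in>I. w t = w t0"
    by (intro DERIV_zero_imp_constant_on[OF I]) (use ode init in auto)
  ultimately show ?thesis using init by auto
next
  case less
  define \<mu> where "\<mu> = sqrt (- E)"
  have E: "E = - \<mu>\<^sup>2" using less by (simp add: \<mu>_def)
  \<comment> \<open>\<open>w' - \<mu> w\<close> solves \<open>f' = - \<mu> f\<close>, hence vanishes; then \<open>w\<close> solves \<open>w' = \<mu> w\<close>\<close>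
  have "\<forall>t\<in>I. (w' t - \<mu> * w t) * exp (\<mu> * t) = (w' t0 - \<mu> * w t0) * exp (\<mu> * t0)"
  proof (rule DERIV_zero_imp_constant_on[OF I])
    fix t assume "t \<in> I"
    with ode[of t] show "((\<lambda>t. (w' t - \<mu> * w t) * exp (\<mu> * t)) has_real_derivative 0) (at t)"
      by (auto intro!: derivative_eq_intros simp: algebra_simps E power2_eq_square)
  qed
  hence w'_eq: "\<forall>t\<in>I. w' t = \<mu> * w t" using init by auto
  have "\<forall>t\<in>I. w t * exp (- \<mu> * t) = w t0 * exp (- \<mu> * t0)"
  proof (rule DERIV_zero_imp_constant_on[OF I])
    fix t assume "t \<in> I"
    with ode[of t] w'_eq show "((\<lambda>t. w t * exp (- \<mu> * t)) has_real_derivative 0) (at t)"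
      by (auto intro!: derivative_eq_intros simp: algebra_simps)
  qed
  with w'_eq init show ?thesis by auto
qed

lemma harmonic_ode_unique:
  fixes u u' v v' :: "real \<Rightarrow> real"
  assumes I: "convex I" "t0 \<in> I"
    and "\<And>t. t \<in> I \<Longrightarrow> (u has_real_derivative u' t) (at t) \<and> (u' has_real_derivative - E * u t) (at t)"
    and "\<And>t. t \<in> I \<Longrightarrow> (v has_real_derivative v' t) (at t) \<and> (v' has_real_derivative - E * v t) (at t)"
    and "u t0 = v t0" "u' t0 = v' t0"
  shows "\<forall>t\<in>I. u t = v t \<and> u' t = v' t"
proof -
  have "((\<lambda>t. u t - v t) has_real_derivative u' t - v' t) (at t) \<and>
        ((\<lambda>t. u' t - v' t) has_real_derivative - E * (u t - v t)) (at t)" if "t \<in> I" for t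
    using assms(3,4)[OF that] by (auto intro!: derivative_eq_intros simp: algebra_simps)
  from harmonic_ode_zero_unique[OF I this] assms(5,6) show ?thesis by auto
qed

lemma geodesic_eq_iff:
  "geodesic_eq p v a \<longleftrightarrow>
     fst a = ((fst v)\<^sup>2 + (snd v)\<^sup>2) / fst p \<and> snd a = 2 * fst v * snd v / fst p"
  unfolding geodesic_eq_def coord_def Chr_def
  by (auto simp: power2_eq_square field_simps add_divide_distrib)

definition geodesic_ode ::
    "real set \<Rightarrow> (real \<Rightarrow> real) \<Rightarrow> (real \<Rightarrow> real) \<Rightarrow> (real \<Rightarrow> real) \<Rightarrow> (real \<Rightarrow> real) \<Rightarrow> bool" where
  "geodesic_ode I x y p q \<longleftrightarrow> (\<forall>t\<in>I. x t > 0 \<and>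
     (x has_real_derivative p t) (at t) \<and> (y has_real_derivative q t) (at t) \<and>
     (p has_real_derivative ((p t)\<^sup>2 + (q t)\<^sup>2) / x t) (at t) \<and>
     (q has_real_derivative 2 * p t * q t / x t) (at t))"

lemma is_geodesic_iff_geodesic_ode:
  "is_geodesic I \<gamma> \<longleftrightarrow> open I \<and> is_interval I \<and> I \<noteq> {} \<and>
     (\<exists>p q. geodesic_ode I (\<lambda>t. fst (\<gamma> t)) (\<lambda>t. snd (\<gamma> t)) p q)"
proof
  assume "is_geodesic I \<gamma>"
  then obtain \<gamma>' \<gamma>'' where I: "open I" "is_interval I" "I \<noteq> {}" and L2: "\<forall>t\<in>I. \<gamma> t \<in> L2"
    and d: "\<forall>t\<in>I. (\<gamma> has_vector_derivative \<gamma>' t) (at t) \<and> (\<gamma>' has_vector_derivative \<gamma>'' t) (at t) \<and>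
                  geodesic_eq (\<gamma> t) (\<gamma>' t) (\<gamma>'' t)"
    unfolding is_geodesic_def by blast
  have "geodesic_ode I (\<lambda>t. fst (\<gamma> t)) (\<lambda>t. snd (\<gamma> t)) (\<lambda>t. fst (\<gamma>' t)) (\<lambda>t. snd (\<gamma>' t))"
    unfolding geodesic_ode_def
  proof
    fix t
    assume t: "t \<in> I"
    have "((\<lambda>t. fst (\<gamma> t)) has_vector_derivative fst (\<gamma>' t)) (at t)"
      "((\<lambda>t. snd (\<gamma> t)) has_vector_derivative snd (\<gamma>' t)) (at t)"
      "((\<lambda>t. fst (\<gamma>' t)) has_vector_derivative fst (\<gamma>'' t)) (at t)"
      "((\<lambda>t. snd (\<gamma>' t)) has_vector_derivative snd (\<gamma>'' t)) (at t)"
      using d t bounded_linear.has_vector_derivative[OF bounded_linear_fst]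
        bounded_linear.has_vector_derivative[OF bounded_linear_snd] by blast+
    with d L2 t show "fst (\<gamma> t) > 0 \<and>
      ((\<lambda>t. fst (\<gamma> t)) has_real_derivative fst (\<gamma>' t)) (at t) \<and>
      ((\<lambda>t. snd (\<gamma> t)) has_real_derivative snd (\<gamma>' t)) (at t) \<and>
      ((\<lambda>t. fst (\<gamma>' t)) has_real_derivative ((fst (\<gamma>' t))\<^sup>2 + (snd (\<gamma>' t))\<^sup>2) / fst (\<gamma> t)) (at t) \<and>
      ((\<lambda>t. snd (\<gamma>' t)) has_real_derivative 2 * fst (\<gamma>' t) * snd (\<gamma>' t) / fst (\<gamma> t)) (at t)"
      by (auto simp: has_real_derivative_iff_has_vector_derivative geodesic_eq_iff L2_def)
  qed
  with I show "open I \<and> is_interval I \<and> I \<noteq> {} \<and>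
     (\<exists>p q. geodesic_ode I (\<lambda>t. fst (\<gamma> t)) (\<lambda>t. snd (\<gamma> t)) p q)" by blast
next
  assume "open I \<and> is_interval I \<and> I \<noteq> {} \<and>
     (\<exists>p q. geodesic_ode I (\<lambda>t. fst (\<gamma> t)) (\<lambda>t. snd (\<gamma> t)) p q)"
  then obtain p q where I: "open I" "is_interval I" "I \<noteq> {}"
    and ode: "geodesic_ode I (\<lambda>t. fst (\<gamma> t)) (\<lambda>t. snd (\<gamma> t)) p q" by blast
  have derivs: "\<forall>t\<in>I. (\<gamma> has_vector_derivative (p t, q t)) (at t) \<and>
      ((\<lambda>t. (p t, q t)) has_vector_derivative
         (((p t)\<^sup>2 + (q t)\<^sup>2) / fst (\<gamma> t), 2 * p t * q t / fst (\<gamma> t))) (at t) \<and>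
      geodesic_eq (\<gamma> t) (p t, q t) (((p t)\<^sup>2 + (q t)\<^sup>2) / fst (\<gamma> t), 2 * p t * q t / fst (\<gamma> t))"
  proof
    fix t assume "t \<in> I"
    with ode have "((\<lambda>t. fst (\<gamma> t)) has_vector_derivative p t) (at t)"
      "((\<lambda>t. snd (\<gamma> t)) has_vector_derivative q t) (at t)"
      "(p has_vector_derivative ((p t)\<^sup>2 + (q t)\<^sup>2) / fst (\<gamma> t)) (at t)"
      "(q has_vector_derivative 2 * p t * q t / fst (\<gamma> t)) (at t)"
      by (auto simp: geodesic_ode_def has_real_derivative_iff_has_vector_derivative)
    from has_vector_derivative_Pair[OF this(1,2)] has_vector_derivative_Pair[OF this(3,4)]
    show "(\<gamma> has_vector_derivative (p t, q t)) (at t) \<and>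
      ((\<lambda>t. (p t, q t)) has_vector_derivative
         (((p t)\<^sup>2 + (q t)\<^sup>2) / fst (\<gamma> t), 2 * p t * q t / fst (\<gamma> t))) (at t) \<and>
      geodesic_eq (\<gamma> t) (p t, q t) (((p t)\<^sup>2 + (q t)\<^sup>2) / fst (\<gamma> t), 2 * p t * q t / fst (\<gamma> t))"
      by (simp add: geodesic_eq_iff)
  qed
  show "is_geodesic I \<gamma>"
    unfolding is_geodesic_def L2_def
    by (intro conjI I exI[of _ "\<lambda>t. (p t, q t)"]
        exI[of _ "\<lambda>t. (((p t)\<^sup>2 + (q t)\<^sup>2) / fst (\<gamma> t), 2 * p t * q t / fst (\<gamma> t))"])
       (use ode derivs in \<open>auto simp: geodesic_ode_def\<close>)
qed

lemma geodesic_ode_first_integrals: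
  assumes ode: "geodesic_ode I x y p q" and I: "convex I" "t0 \<in> I"
  obtains K E where "\<forall>t\<in>I. q t = K * (x t)\<^sup>2" and "\<forall>t\<in>I. (q t)\<^sup>2 - (p t)\<^sup>2 = E * (x t)\<^sup>2"
proof -
  have pos: "\<And>t. t \<in> I \<Longrightarrow> x t > 0" using ode by (simp add: geodesic_ode_def)
  have K: "\<forall>t\<in>I. q t / (x t)\<^sup>2 = q t0 / (x t0)\<^sup>2"
  proof (rule DERIV_zero_imp_constant_on[OF I])
    fix t assume "t \<in> I"
    with ode show "((\<lambda>t. q t / (x t)\<^sup>2) has_real_derivative 0) (at t)"
      by (auto simp: geodesic_ode_def intro!: derivative_eq_intros simp: field_simps power2_eq_square)
  qed
  have E: "\<forall>t\<in>I. ((q t)\<^sup>2 - (p t)\<^sup>2) / (x t)\<^sup>2 = ((q t0)\<^sup>2 - (p t0)\<^sup>2) / (x t0)\<^sup>2"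
  proof (rule DERIV_zero_imp_constant_on[OF I])
    fix t assume "t \<in> I"
    with ode show "((\<lambda>t. ((q t)\<^sup>2 - (p t)\<^sup>2) / (x t)\<^sup>2) has_real_derivative 0) (at t)"
      by (auto simp: geodesic_ode_def intro!: derivative_eq_intros simp: field_simps power2_eq_square)
  qed
  show ?thesis
  proof (intro that ballI)
    fix t assume "t \<in> I"
    then have "(x t)\<^sup>2 > 0" using pos[of t] by simp
    from \<open>t \<in> I\<close> K E this
    show "q t = q t0 / (x t0)\<^sup>2 * (x t)\<^sup>2"
      and "(q t)\<^sup>2 - (p t)\<^sup>2 = ((q t0)\<^sup>2 - (p t0)\<^sup>2) / (x t0)\<^sup>2 * (x t)\<^sup>2"
      by (auto simp: divide_eq_eq)
  qed
qed

(* The equations satisfied by u = 1/x^1 and its derivative along a geodesic with momentum K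
   and energy E. *)
definition reciprocal_ode ::
    "real set \<Rightarrow> real \<Rightarrow> real \<Rightarrow> (real \<Rightarrow> real) \<Rightarrow> (real \<Rightarrow> real) \<Rightarrow> bool" where
  "reciprocal_ode I E K u u' \<longleftrightarrow> (\<forall>t\<in>I. u t > 0 \<and>
     (u has_real_derivative u' t) (at t) \<and> (u' has_real_derivative - E * u t) (at t) \<and>
     (u' t)\<^sup>2 + E * (u t)\<^sup>2 = K\<^sup>2)"

lemma geodesic_ode_reciprocal:
  assumes ode: "geodesic_ode I x y p q"
    and K: "\<forall>t\<in>I. q t = K * (x t)\<^sup>2" and E: "\<forall>t\<in>I. (q t)\<^sup>2 - (p t)\<^sup>2 = E * (x t)\<^sup>2"
  shows "reciprocal_ode I E K (\<lambda>t. 1 / x t) (\<lambda>t. - p t / (x t)\<^sup>2)"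
  unfolding reciprocal_ode_def
proof
  fix t assume t: "t \<in> I"
  have x: "x t > 0" and dx: "(x has_real_derivative p t) (at t)"
    and dp: "(p has_real_derivative ((p t)\<^sup>2 + (q t)\<^sup>2) / x t) (at t)"
    using ode t by (auto simp: geodesic_ode_def)
  have E_t: "(q t)\<^sup>2 - (p t)\<^sup>2 = E * (x t)\<^sup>2" and K_t: "q t = K * (x t)\<^sup>2" using E K t by auto
  have q_sq: "q t * q t = E * (x t * x t) + p t * p t" using E_t by (simp add: power2_eq_square)
  have "((\<lambda>t. - p t / (x t)\<^sup>2) has_real_derivative - E * (1 / x t)) (at t)"
    using dx dp x by (auto intro!: derivative_eq_intros simp: power2_eq_square field_simps q_sq)
  then show "1 / x t > 0 \<and>
     ((\<lambda>t. 1 / x t) has_real_derivative - p t / (x t)\<^sup>2) (at t) \<and>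
     ((\<lambda>t. - p t / (x t)\<^sup>2) has_real_derivative - E * (1 / x t)) (at t) \<and>
     (- p t / (x t)\<^sup>2)\<^sup>2 + E * (1 / x t)\<^sup>2 = K\<^sup>2"
    using dx x E_t K_t
    by (auto intro!: derivative_eq_intros simp: field_simps power2_eq_square)
qed

lemma reciprocal_ode_integrate_snd:
  assumes u: "reciprocal_ode I E K u u'" and I: "convex I" "t0 \<in> I" and "K \<noteq> 0"
    and y: "\<And>t. t \<in> I \<Longrightarrow> (y has_real_derivative K / (u t)\<^sup>2) (at t)"
  shows "\<exists>\<beta>. \<forall>t\<in>I. y t = \<beta> - u' t / (K * u t)"
proof -
  \<comment> \<open>\<open>(u'/u)' = (u'' u - u'\<^sup>2) / u\<^sup>2 = - K\<^sup>2 / u\<^sup>2\<close> by the conservation law\<close>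
  have "\<forall>t\<in>I. y t + u' t / (K * u t) = y t0 + u' t0 / (K * u t0)"
  proof (rule DERIV_zero_imp_constant_on[OF I])
    fix t assume t: "t \<in> I"
    with u have "u t > 0" and du: "(u has_real_derivative u' t) (at t)"
      and du': "(u' has_real_derivative - E * u t) (at t)"
      and cons: "u' t * u' t = K * K - E * (u t * u t)"
      by (auto simp: reciprocal_ode_def power2_eq_square algebra_simps)
    with y[OF t] \<open>K \<noteq> 0\<close>
    show "((\<lambda>t. y t + u' t / (K * u t)) has_real_derivative 0) (at t)"
      by (auto intro!: derivative_eq_intros simp: field_simps power2_eq_square cons)
  qed
  then show ?thesis by (intro exI[of _ "y t0 + u' t0 / (K * u t0)"]) (auto simp: algebra_simps)
qed

lemma hyperbolic_polar_coordinates: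
  fixes A B :: real
  assumes "0 < A" "A < \<bar>B\<bar>"
  obtains R \<theta> where "R > 0" "\<theta> > 0" "A = R * sinh \<theta>" "\<bar>B\<bar> = R * cosh \<theta>"
proof -
  define R where "R = sqrt (B\<^sup>2 - A\<^sup>2)"
  have "A\<^sup>2 < \<bar>B\<bar>\<^sup>2" using assms by (intro power_strict_mono) auto
  then have R: "R > 0" "R\<^sup>2 = B\<^sup>2 - A\<^sup>2" by (auto simp: R_def)
  have "R * cosh (arsinh (A / R)) = sqrt (R\<^sup>2 * ((A / R)\<^sup>2 + 1))"
    using R(1) by (simp add: cosh_arsinh_real real_sqrt_mult)
  also have "R\<^sup>2 * ((A / R)\<^sup>2 + 1) = A\<^sup>2 + R\<^sup>2" using R(1) by (simp add: field_simps)
  also have "A\<^sup>2 + R\<^sup>2 = B\<^sup>2" using R(2) by simp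
  finally have "\<bar>B\<bar> = R * cosh (arsinh (A / R))" by simp
  moreover have "arsinh (A / R) > 0" "A = R * sinh (arsinh (A / R))" using R assms by auto
  ultimately show thesis using R by (intro that)
qed

lemma polar_coordinates_upper_half_plane:
  fixes A B :: real
  assumes "0 < A"
  obtains R \<theta> where "R > 0" "0 < \<theta>" "\<theta> < pi" "A = R * sin \<theta>" "B = R * cos \<theta>"
proof -
  define R where "R = sqrt (A\<^sup>2 + B\<^sup>2)"
  have R: "R > 0" "R\<^sup>2 = A\<^sup>2 + B\<^sup>2" using assms by (auto simp: R_def add_pos_nonneg)
  have "(B / R)\<^sup>2 + (A / R)\<^sup>2 = (A\<^sup>2 + B\<^sup>2) / R\<^sup>2"
    by (simp add: power_divide add_divide_distrib)
  then have "(B / R)\<^sup>2 + (A / R)\<^sup>2 = 1" using R assms by simp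
  moreover have "0 \<le> A / R" using assms R by simp
  ultimately obtain \<theta> where \<theta>: "0 \<le> \<theta>" "\<theta> \<le> pi" "B / R = cos \<theta>" "A / R = sin \<theta>"
    using sincos_total_pi by blast
  have "sin \<theta> > 0" unfolding \<theta>(4)[symmetric] using assms R(1) by simp
  then have "\<theta> \<noteq> 0" "\<theta> \<noteq> pi" by auto
  with \<theta> R show thesis by (intro that[of R \<theta>]) (auto simp: field_simps)
qed

lemma sin_pos_on_interval_imp_in_zero_pi:
  fixes f :: "real \<Rightarrow> real"
  assumes I: "is_interval I" "t0 \<in> I" and f: "continuous_on I f" "0 < f t0" "f t0 < pi"
    and sin_pos: "\<forall>t\<in>I. sin (f t) > 0"
  shows "\<forall>t\<in>I. 0 < f t \<and> f t < pi"
proof -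
  have S: "is_interval (f ` I)"
    using connected_continuous_image[OF f(1)] I(1) by (simp add: is_interval_connected_1)
  have t0: "f t0 \<in> f ` I" using I(2) by simp
  show ?thesis
  proof (intro ballI)
    fix t assume t: "t \<in> I"
    show "0 < f t \<and> f t < pi"
    proof (rule ccontr)
      assume "\<not> (0 < f t \<and> f t < pi)"
      then have "0 \<in> f ` I \<or> pi \<in> f ` I"
        using S[unfolded is_interval_1, rule_format, of "f t" "f t0"]
          S[unfolded is_interval_1, rule_format, of "f t0" "f t"] t t0 f(2,3)
        by (metis image_eqI linorder_not_less less_imp_le)
      then show False using sin_pos by auto
    qed
  qed
qed

lemma reciprocal_ode_affine:
  assumes u: "reciprocal_ode I 0 K u u'" and I: "convex I" "t0 \<in> I"
  shows "\<exists>a b. a\<^sup>2 = K\<^sup>2 \<and> (\<forall>t\<in>I. u t = a * t + b \<and> u' t = a)"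
proof (intro exI conjI)
  show "\<forall>t\<in>I. u t = u' t0 * t + (u t0 - u' t0 * t0) \<and> u' t = u' t0"
  proof (rule harmonic_ode_unique[OF I, where E = 0])
    fix t assume "t \<in> I"
    with u show "(u has_real_derivative u' t) (at t) \<and> (u' has_real_derivative - 0 * u t) (at t)"
      by (simp add: reciprocal_ode_def)
    show "((\<lambda>t. u' t0 * t + (u t0 - u' t0 * t0)) has_real_derivative u' t0) (at t) \<and>
      ((\<lambda>t. u' t0) has_real_derivative - 0 * (u' t0 * t + (u t0 - u' t0 * t0))) (at t)"
      by (auto intro!: derivative_eq_intros)
  qed simp_all
  show "(u' t0)\<^sup>2 = K\<^sup>2" using u I(2) by (simp add: reciprocal_ode_def)
qed

lemma reciprocal_ode_sinh:
  assumes u: "reciprocal_ode I E K u u'" and I: "convex I" "t0 \<in> I" and "E < 0" "K \<noteq> 0"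
  shows "\<exists>R a b. R > 0 \<and> a\<^sup>2 = - E \<and> (R * a)\<^sup>2 = K\<^sup>2 \<and>
           (\<forall>t\<in>I. u t = R * sinh (a * t + b) \<and> u' t = R * a * cosh (a * t + b))"
proof -
  define \<mu> where "\<mu> = sqrt (- E)"
  have \<mu>: "\<mu> > 0" "E = - \<mu>\<^sup>2" using \<open>E < 0\<close> by (auto simp: \<mu>_def)
  define A B where "A = u t0" and "B = u' t0 / \<mu>"
  have "A > 0" and cons: "(\<mu> * B)\<^sup>2 - \<mu>\<^sup>2 * A\<^sup>2 = K\<^sup>2"
    using u I(2) \<mu> by (auto simp: reciprocal_ode_def A_def B_def)
  then have "(\<mu> * B)\<^sup>2 - \<mu>\<^sup>2 * A\<^sup>2 > 0" using \<open>K \<noteq> 0\<close> by simp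
  then have "\<mu>\<^sup>2 * A\<^sup>2 < \<mu>\<^sup>2 * B\<^sup>2" by (simp add: power_mult_distrib)
  then have "A\<^sup>2 < \<bar>B\<bar>\<^sup>2" using \<mu> by simp
  then have "A < \<bar>B\<bar>" by (rule power_less_imp_less_base) simp
  then obtain R \<theta> where R: "R > 0" "A = R * sinh \<theta>" "\<bar>B\<bar> = R * cosh \<theta>"
    using hyperbolic_polar_coordinates[OF \<open>A > 0\<close> \<open>A < \<bar>B\<bar>\<close>] by blast
  define a where "a = sgn B * \<mu>"
  have a2: "a\<^sup>2 = \<mu>\<^sup>2" using \<open>A < \<bar>B\<bar>\<close> \<open>A > 0\<close> by (auto simp: a_def power_mult_distrib sgn_if)
  have sol: "\<forall>t\<in>I. u t = R * sinh (a * t + (\<theta> - a * t0)) \<and> u' t = R * a * cosh (a * t + (\<theta> - a * t0))"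
  proof (rule harmonic_ode_unique[OF I, where E = E])
    show "u t0 = R * sinh (a * t0 + (\<theta> - a * t0))" using R by (simp add: A_def)
    have "u' t0 = \<mu> * (sgn B * \<bar>B\<bar>)" using \<mu> by (simp add: B_def sgn_mult_abs)
    then show "u' t0 = R * a * cosh (a * t0 + (\<theta> - a * t0))" using R by (simp add: a_def)
  next
    fix t assume "t \<in> I"
    with u show "(u has_real_derivative u' t) (at t) \<and> (u' has_real_derivative - E * u t) (at t)"
      by (simp add: reciprocal_ode_def)
    show "((\<lambda>t. R * sinh (a * t + (\<theta> - a * t0))) has_real_derivative R * a * cosh (a * t + (\<theta> - a * t0))) (at t) \<and>
      ((\<lambda>t. R * a * cosh (a * t + (\<theta> - a * t0))) has_real_derivative - E * (R * sinh (a * t + (\<theta> - a * t0)))) (at t)"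
      using a2 \<mu> by (auto intro!: derivative_eq_intros simp: power2_eq_square)
  qed
  have "(R * a)\<^sup>2 = (R * a * cosh \<theta>)\<^sup>2 - a\<^sup>2 * (R * sinh \<theta>)\<^sup>2"
    by (simp add: power_mult_distrib cosh_square_eq algebra_simps)
  also have "\<dots> = K\<^sup>2" using sol u I(2) a2 \<mu> by (auto simp: reciprocal_ode_def)
  finally show ?thesis
    using R a2 \<mu> sol by (intro exI[of _ R] exI[of _ a] exI[of _ "\<theta> - a * t0"]) auto
qed

lemma reciprocal_ode_sin:
  assumes u: "reciprocal_ode I E K u u'" and I: "is_interval I" "t0 \<in> I" and "E > 0"
  shows "\<exists>R a b. R > 0 \<and> a\<^sup>2 = E \<and> (R * a)\<^sup>2 = K\<^sup>2 \<and>
           (\<forall>t\<in>I. 0 < a * t + b \<and> a * t + b < pi \<and>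
                  u t = R * sin (a * t + b) \<and> u' t = R * a * cos (a * t + b))"
proof -
  define a where "a = sqrt E"
  have a: "a > 0" "E = a\<^sup>2" using \<open>E > 0\<close> by (auto simp: a_def)
  have "u t0 > 0" using u I(2) by (simp add: reciprocal_ode_def)
  then obtain R \<theta> where R: "R > 0" "0 < \<theta>" "\<theta> < pi" "u t0 = R * sin \<theta>" "u' t0 / a = R * cos \<theta>"
    using polar_coordinates_upper_half_plane[of "u t0" "u' t0 / a"] by blast
  define b where "b = \<theta> - a * t0"
  have sol: "\<forall>t\<in>I. u t = R * sin (a * t + b) \<and> u' t = R * a * cos (a * t + b)"
  proof (rule harmonic_ode_unique[OF is_interval_convex[OF I(1)] I(2), where E = E])
    show "u t0 = R * sin (a * t0 + b)" using R by (simp add: b_def)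
    show "u' t0 = R * a * cos (a * t0 + b)" using R a by (simp add: b_def field_simps)
  next
    fix t assume "t \<in> I"
    with u show "(u has_real_derivative u' t) (at t) \<and> (u' has_real_derivative - E * u t) (at t)"
      by (simp add: reciprocal_ode_def)
    show "((\<lambda>t. R * sin (a * t + b)) has_real_derivative R * a * cos (a * t + b)) (at t) \<and>
      ((\<lambda>t. R * a * cos (a * t + b)) has_real_derivative - E * (R * sin (a * t + b))) (at t)"
      using a by (auto intro!: derivative_eq_intros simp: power2_eq_square)
  qed
  have "\<forall>t\<in>I. 0 < a * t + b \<and> a * t + b < pi"
  proof (rule sin_pos_on_interval_imp_in_zero_pi[OF I])
    show "\<forall>t\<in>I. sin (a * t + b) > 0"
      using sol u R(1) by (auto simp: reciprocal_ode_def zero_less_mult_iff)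
  qed (use R in \<open>auto simp: b_def intro!: continuous_intros\<close>)
  moreover have "(R * a)\<^sup>2 = K\<^sup>2"
  proof -
    have "(R * a)\<^sup>2 = (R * a * cos \<theta>)\<^sup>2 + a\<^sup>2 * (R * sin \<theta>)\<^sup>2"
      by (simp add: power_mult_distrib algebra_simps flip: distrib_left)
    also have "\<dots> = K\<^sup>2" using sol u I(2) a by (auto simp: reciprocal_ode_def b_def)
    finally show ?thesis .
  qed
  ultimately show ?thesis
    using R a sol by (intro exI[of _ R] exI[of _ a] exI[of _ b]) auto
qed

(* The point of a geodesic with momentum K \<noteq> 0, written in terms of u = 1/x^1 and u'. *)
definition recip_point :: "real \<Rightarrow> real \<Rightarrow> real \<Rightarrow> real \<Rightarrow> real \<times> real" where
  "recip_point K \<beta> u u' = (1 / u, \<beta> - u' / (K * u))"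

lemma neg_divide_mem_signs: "(c :: real)\<^sup>2 = K\<^sup>2 \<Longrightarrow> K \<noteq> 0 \<Longrightarrow> - c / K \<in> {-1, 1}"
  by (auto simp: power2_eq_iff)

lemma recip_point_affine: "recip_point K \<beta> \<theta> a = sigma2 (- a / K) \<beta> \<theta>"
  by (simp add: recip_point_def sigma2_def)

lemma recip_point_sinh: "recip_point K \<beta> (R * sinh \<theta>) (R * a * cosh \<theta>) = sigma3 (- (R * a) / K) R \<beta> \<theta>"
  by (cases "sinh \<theta> = 0"; cases "R = 0") (auto simp: recip_point_def sigma3_def field_simps)

lemma recip_point_sin: "recip_point K \<beta> (R * sin \<theta>) (R * a * cos \<theta>) = sigma4 (- (R * a) / K) R \<beta> \<theta>"
  by (cases "sin \<theta> = 0"; cases "R = 0") (auto simp: recip_point_def sigma4_def cot_def field_simps)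

definition model_reparametrization :: "real set \<Rightarrow> (real \<Rightarrow> real \<times> real) \<Rightarrow> bool" where
  "model_reparametrization I \<gamma> \<longleftrightarrow> (\<exists>a b. a \<noteq> 0 \<and>
     ((\<exists>\<alpha>. \<forall>t\<in>I. \<gamma> t = sigma1 \<alpha> (a * t + b)) \<or>
      (\<exists>s \<alpha>. s \<in> {-1, 1} \<and> (\<forall>t\<in>I. 0 < a * t + b \<and> \<gamma> t = sigma2 s \<alpha> (a * t + b))) \<or>
      (\<exists>s c \<beta>. s \<in> {-1, 1} \<and> c > 0 \<and>
         (\<forall>t\<in>I. 0 < a * t + b \<and> \<gamma> t = sigma3 s c \<beta> (a * t + b))) \<or>
      (\<exists>s c \<beta>. s \<in> {-1, 1} \<and> c > 0 \<and>
         (\<forall>t\<in>I. 0 < a * t + b \<and> a * t + b < pi \<and> \<gamma> t = sigma4 s c \<beta> (a * t + b)))))"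

lemma geodesic_ode_zero_momentum:
  assumes ode: "geodesic_ode I x y p q" and I: "convex I" "t0 \<in> I" and q: "\<forall>t\<in>I. q t = 0"
    and nonconst: "\<exists>s\<in>I. \<exists>t\<in>I. (x s, y s) \<noteq> (x t, y t)"
  shows "model_reparametrization I (\<lambda>t. (x t, y t))"
proof -
  have pos: "x t > 0" if "t \<in> I" for t using ode that by (simp add: geodesic_ode_def)
  \<comment> \<open>with \<open>q = 0\<close> the first geodesic equation reads \<open>(p / x)' = 0\<close>\<close>
  define m where "m = p t0 / x t0"
  have "\<forall>t\<in>I. p t / x t = p t0 / x t0"
  proof (rule DERIV_zero_imp_constant_on[OF I])
    fix t assume "t \<in> I"
    with ode q show "((\<lambda>t. p t / x t) has_real_derivative 0) (at t)"
      by (auto simp: geodesic_ode_def intro!: derivative_eq_intros simp: field_simps power2_eq_square)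
  qed
  have p: "\<forall>t\<in>I. p t = m * x t"
  proof
    fix t assume "t \<in> I"
    with \<open>\<forall>t\<in>I. p t / x t = p t0 / x t0\<close> pos[of t] show "p t = m * x t"
      by (simp add: m_def divide_eq_eq)
  qed
  have "\<forall>t\<in>I. ln (x t) - m * t = ln (x t0) - m * t0"
  proof (rule DERIV_zero_imp_constant_on[OF I])
    fix t assume "t \<in> I"
    with ode p show "((\<lambda>t. ln (x t) - m * t) has_real_derivative 0) (at t)"
      by (auto simp: geodesic_ode_def intro!: derivative_eq_intros simp: field_simps)
  qed
  then have x: "\<forall>t\<in>I. x t = exp (m * t + (ln (x t0) - m * t0))"
    using pos by (metis add.commute diff_add_cancel exp_ln)
  have y: "\<forall>t\<in>I. y t = y t0"
    by (rule DERIV_zero_imp_constant_on[OF I]) (use ode q in \<open>auto simp: geodesic_ode_def\<close>)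
  have "m \<noteq> 0" using nonconst x y by auto
  with x y show ?thesis
    unfolding model_reparametrization_def sigma1_def
    by (intro exI[of _ m] exI[of _ "ln (x t0) - m * t0"]) auto
qed

lemma reciprocal_ode_model_reparametrization:
  assumes rec: "reciprocal_ode I E K u u'" and "K \<noteq> 0" and I: "is_interval I" "t0 \<in> I"
    and \<gamma>: "\<forall>t\<in>I. \<gamma> t = recip_point K \<beta> (u t) (u' t)"
  shows "model_reparametrization I \<gamma>"
proof -
  have cvx: "convex I" using I(1) by (rule is_interval_convex)
  have u_pos: "\<forall>t\<in>I. u t > 0" using rec by (simp add: reciprocal_ode_def)
  consider "E = 0" | "E < 0" | "E > 0" by linarith
  then show ?thesis
  proof cases
    case 1
    then obtain a b where "a\<^sup>2 = K\<^sup>2" and sol: "\<forall>t\<in>I. u t = a * t + b \<and> u' t = a"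
      using reciprocal_ode_affine[OF _ cvx I(2)] rec by blast
    then have "- a / K \<in> {-1, 1}" "a \<noteq> 0" using \<open>K \<noteq> 0\<close> neg_divide_mem_signs by auto
    moreover have "\<forall>t\<in>I. 0 < a * t + b \<and> \<gamma> t = sigma2 (- a / K) \<beta> (a * t + b)"
      using sol \<gamma> u_pos by (simp add: recip_point_affine)
    ultimately show ?thesis unfolding model_reparametrization_def by blast
  next
    case 2
    then obtain R a b where R: "R > 0" "a\<^sup>2 = - E" "(R * a)\<^sup>2 = K\<^sup>2" and
      sol: "\<forall>t\<in>I. u t = R * sinh (a * t + b) \<and> u' t = R * a * cosh (a * t + b)"
      using reciprocal_ode_sinh[OF rec cvx I(2) _ \<open>K \<noteq> 0\<close>] by blast
    then have "- (R * a) / K \<in> {-1, 1}" "a \<noteq> 0" using \<open>K \<noteq> 0\<close> neg_divide_mem_signs 2 by auto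
    moreover have "\<forall>t\<in>I. 0 < a * t + b \<and> \<gamma> t = sigma3 (- (R * a) / K) R \<beta> (a * t + b)"
    proof
      fix t assume "t \<in> I"
      with sol u_pos \<gamma> have "0 < R * sinh (a * t + b)"
        and "\<gamma> t = recip_point K \<beta> (R * sinh (a * t + b)) (R * a * cosh (a * t + b))" by auto
      with R(1) show "0 < a * t + b \<and> \<gamma> t = sigma3 (- (R * a) / K) R \<beta> (a * t + b)"
        by (simp add: recip_point_sinh zero_less_mult_iff)
    qed
    ultimately show ?thesis unfolding model_reparametrization_def using R(1) by blast
  next
    case 3
    then obtain R a b where R: "R > 0" "a\<^sup>2 = E" "(R * a)\<^sup>2 = K\<^sup>2" and
      sol: "\<forall>t\<in>I. 0 < a * t + b \<and> a * t + b < pi \<and>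
                   u t = R * sin (a * t + b) \<and> u' t = R * a * cos (a * t + b)"
      using reciprocal_ode_sin[OF rec I] by blast
    then have "- (R * a) / K \<in> {-1, 1}" "a \<noteq> 0" using \<open>K \<noteq> 0\<close> neg_divide_mem_signs 3 by auto
    moreover have "\<forall>t\<in>I. 0 < a * t + b \<and> a * t + b < pi \<and>
        \<gamma> t = sigma4 (- (R * a) / K) R \<beta> (a * t + b)"
      using sol \<gamma> by (simp add: recip_point_sin)
    ultimately show ?thesis unfolding model_reparametrization_def using R(1) by blast
  qed
qed

lemma is_geodesic_classification:
  assumes geo: "is_geodesic I \<gamma>" and nonconst: "\<exists>s\<in>I. \<exists>t\<in>I. \<gamma> s \<noteq> \<gamma> t"
  shows "model_reparametrization I \<gamma>"
proof -
  define x y where "x = (\<lambda>t. fst (\<gamma> t))" and "y = (\<lambda>t. snd (\<gamma> t))"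
  have \<gamma>: "\<gamma> = (\<lambda>t. (x t, y t))" by (simp add: x_def y_def)
  obtain p q where I: "is_interval I" "I \<noteq> {}" and ode: "geodesic_ode I x y p q"
    using geo by (auto simp: is_geodesic_iff_geodesic_ode x_def y_def)
  obtain t0 where t0: "t0 \<in> I" using I(2) by blast
  have cvx: "convex I" using I(1) by (rule is_interval_convex)
  obtain K E where K: "\<forall>t\<in>I. q t = K * (x t)\<^sup>2" and E: "\<forall>t\<in>I. (q t)\<^sup>2 - (p t)\<^sup>2 = E * (x t)\<^sup>2"
    using geodesic_ode_first_integrals[OF ode cvx t0] by blast
  show ?thesis
  proof (cases "K = 0")
    case True
    with geodesic_ode_zero_momentum[OF ode cvx t0] K nonconst show ?thesis by (simp add: \<gamma>)
  next
    case False
    define u u' where "u = (\<lambda>t. 1 / x t)" and "u' = (\<lambda>t. - p t / (x t)\<^sup>2)"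
    have rec: "reciprocal_ode I E K u u'"
      unfolding u_def u'_def by (rule geodesic_ode_reciprocal[OF ode K E])
    have "\<exists>\<beta>. \<forall>t\<in>I. y t = \<beta> - u' t / (K * u t)"
    proof (rule reciprocal_ode_integrate_snd[OF rec cvx t0 False])
      fix t assume "t \<in> I"
      with ode K show "(y has_real_derivative K / (u t)\<^sup>2) (at t)"
        by (auto simp: geodesic_ode_def u_def power_one_over)
    qed
    then obtain \<beta> where "\<forall>t\<in>I. y t = \<beta> - u' t / (K * u t)" ..
    then have "\<forall>t\<in>I. \<gamma> t = recip_point K \<beta> (u t) (u' t)"
      by (simp add: \<gamma> recip_point_def u_def)
    then show ?thesis by (rule reciprocal_ode_model_reparametrization[OF rec False I(1) t0])
  qed
qed

lemma reciprocal_ode_recip_point_derivative: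
  assumes rec: "reciprocal_ode I E K u u'" and "K \<noteq> 0" and t: "t \<in> I"
  shows "((\<lambda>t. recip_point K \<beta> (u t) (u' t)) has_vector_derivative
           (- u' t / (u t)\<^sup>2, K / (u t)\<^sup>2)) (at t)"
proof -
  from rec t have u: "u t > 0" and du: "(u has_real_derivative u' t) (at t)"
    and du': "(u' has_real_derivative - E * u t) (at t)"
    and cons: "K * K = u' t * u' t + E * (u t * u t)"
    by (auto simp: reciprocal_ode_def power2_eq_square)
  have "((\<lambda>t. 1 / u t) has_real_derivative - u' t / (u t)\<^sup>2) (at t)"
    using du u by (auto intro!: derivative_eq_intros simp: power2_eq_square)
  moreover have "((\<lambda>t. \<beta> - u' t / (K * u t)) has_real_derivative K / (u t)\<^sup>2) (at t)"
    using du du' u \<open>K \<noteq> 0\<close>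
    by (auto intro!: derivative_eq_intros simp: power2_eq_square field_simps) (use cons in algebra)
  ultimately show ?thesis
    unfolding recip_point_def
    by (auto intro!: has_vector_derivative_Pair simp: has_real_derivative_iff_has_vector_derivative)
qed

lemma reciprocal_ode_recip_point_geodesic:
  assumes rec: "reciprocal_ode I E K u u'" and "K \<noteq> 0" and I: "open I" "is_interval I" "I \<noteq> {}"
  shows "is_geodesic I (\<lambda>t. recip_point K \<beta> (u t) (u' t))"
  unfolding is_geodesic_iff_geodesic_ode
proof (intro conjI I exI)
  show "geodesic_ode I (\<lambda>t. fst (recip_point K \<beta> (u t) (u' t))) (\<lambda>t. snd (recip_point K \<beta> (u t) (u' t)))
          (\<lambda>t. - u' t / (u t)\<^sup>2) (\<lambda>t. K / (u t)\<^sup>2)"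
    unfolding geodesic_ode_def
  proof
    fix t assume t: "t \<in> I"
    from rec t have u: "u t > 0" and du: "(u has_real_derivative u' t) (at t)"
      and du': "(u' has_real_derivative - E * u t) (at t)"
      and cons: "K * K = u' t * u' t + E * (u t * u t)"
      by (auto simp: reciprocal_ode_def power2_eq_square)
    have "((\<lambda>t. fst (recip_point K \<beta> (u t) (u' t))) has_real_derivative - u' t / (u t)\<^sup>2) (at t) \<and>
          ((\<lambda>t. snd (recip_point K \<beta> (u t) (u' t))) has_real_derivative K / (u t)\<^sup>2) (at t)"
      using reciprocal_ode_recip_point_derivative[OF rec \<open>K \<noteq> 0\<close> t, of \<beta>]
        bounded_linear.has_vector_derivative[OF bounded_linear_fst]
        bounded_linear.has_vector_derivative[OF bounded_linear_snd]
      by (fastforce simp: has_real_derivative_iff_has_vector_derivative)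
    moreover have "((\<lambda>t. - u' t / (u t)\<^sup>2) has_real_derivative
        ((- u' t / (u t)\<^sup>2)\<^sup>2 + (K / (u t)\<^sup>2)\<^sup>2) / fst (recip_point K \<beta> (u t) (u' t))) (at t)"
      using du du' u
      by (auto intro!: derivative_eq_intros simp: recip_point_def power2_eq_square field_simps cons)
    moreover have "((\<lambda>t. K / (u t)\<^sup>2) has_real_derivative
        2 * (- u' t / (u t)\<^sup>2) * (K / (u t)\<^sup>2) / fst (recip_point K \<beta> (u t) (u' t))) (at t)"
      using du u by (auto intro!: derivative_eq_intros simp: recip_point_def power2_eq_square field_simps)
    ultimately show "fst (recip_point K \<beta> (u t) (u' t)) > 0 \<and>
      ((\<lambda>t. fst (recip_point K \<beta> (u t) (u' t))) has_real_derivative - u' t / (u t)\<^sup>2) (at t) \<and>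
      ((\<lambda>t. snd (recip_point K \<beta> (u t) (u' t))) has_real_derivative K / (u t)\<^sup>2) (at t) \<and>
      ((\<lambda>t. - u' t / (u t)\<^sup>2) has_real_derivative
        ((- u' t / (u t)\<^sup>2)\<^sup>2 + (K / (u t)\<^sup>2)\<^sup>2) / fst (recip_point K \<beta> (u t) (u' t))) (at t) \<and>
      ((\<lambda>t. K / (u t)\<^sup>2) has_real_derivative
        2 * (- u' t / (u t)\<^sup>2) * (K / (u t)\<^sup>2) / fst (recip_point K \<beta> (u t) (u' t))) (at t)"
      using u by (simp add: recip_point_def)
  qed
qed

lemma reciprocal_ode_recip_point_energy:
  assumes rec: "reciprocal_ode I E K u u'" and "K \<noteq> 0" and t: "t \<in> I"
    and \<gamma>: "\<gamma> = (\<lambda>t. recip_point K \<beta> (u t) (u' t))"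
  shows "metric_g (\<gamma> t) (vector_derivative \<gamma> (at t)) (vector_derivative \<gamma> (at t)) = E"
proof -
  from rec t have u: "u t > 0" and cons: "K\<^sup>2 = (u' t)\<^sup>2 + E * (u t)\<^sup>2"
    by (auto simp: reciprocal_ode_def)
  have vd: "vector_derivative \<gamma> (at t) = (- u' t / (u t)\<^sup>2, K / (u t)\<^sup>2)"
    unfolding \<gamma> by (rule vector_derivative_at[OF reciprocal_ode_recip_point_derivative[OF rec \<open>K \<noteq> 0\<close> t]])
  from u show ?thesis unfolding vd
    by (simp add: \<gamma> metric_g_def recip_point_def power2_eq_square field_simps) (use cons in algebra)
qed

lemma reciprocal_ode_len_density:
  assumes "reciprocal_ode I E K u u'" "K \<noteq> 0" "t \<in> I"
  shows "len_density (\<lambda>t. recip_point K \<beta> (u t) (u' t)) t = sgn E * sqrt \<bar>E\<bar>"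
  using reciprocal_ode_recip_point_energy[OF assms refl] by (simp add: len_density_def)

lemma reciprocal_ode_conic:
  assumes "reciprocal_ode I E K u u'" "K \<noteq> 0" "t \<in> I"
  shows "(fst (recip_point K \<beta> (u t) (u' t)))\<^sup>2 - E / K\<^sup>2 = (snd (recip_point K \<beta> (u t) (u' t)) + - \<beta>)\<^sup>2"
proof -
  from assms have "u t > 0" "(u' t)\<^sup>2 + E * (u t)\<^sup>2 = K\<^sup>2" by (auto simp: reciprocal_ode_def)
  with \<open>K \<noteq> 0\<close> show ?thesis by (simp add: recip_point_def field_simps power2_eq_square)
qed

lemma maximal_geodesic_if_frontier_blowup:
  assumes geo: "is_geodesic I \<sigma>"
    and blowup: "\<forall>e\<in>frontier I. filterlim (\<lambda>t. fst (\<sigma> t)) at_top (at e within I)"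
  shows "maximal_geodesic I \<sigma>"
  unfolding maximal_geodesic_def
proof (intro conjI geo allI impI)
  fix J \<gamma> assume "is_geodesic J \<gamma> \<and> I \<subseteq> J \<and> (\<forall>t\<in>I. \<gamma> t = \<sigma> t)"
  then have geoJ: "is_geodesic J \<gamma>" and "I \<subseteq> J" and eq: "\<forall>t\<in>I. \<gamma> t = \<sigma> t" by auto
  have "open I" "I \<noteq> {}" using geo by (auto simp: is_geodesic_def)
  show "J = I"
  proof (rule ccontr)
    assume "J \<noteq> I"
    have "connected J" using geoJ by (simp add: is_geodesic_def is_interval_connected)
    then obtain e where e: "e \<in> J" "e \<in> frontier I"
      using connected_Int_frontier[of J I] \<open>I \<subseteq> J\<close> \<open>I \<noteq> {}\<close> \<open>J \<noteq> I\<close> by blast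
    \<comment> \<open>\<open>\<gamma>\<close> is continuous at the boundary point \<open>e\<close>, so \<open>x\<^sup>1\<close> stays bounded near \<open>e\<close>\<close>
    obtain \<gamma>' where "(\<gamma> has_vector_derivative \<gamma>') (at e)"
      using geoJ e(1) unfolding is_geodesic_def by blast
    then have "continuous (at e) \<gamma>" by (rule has_vector_derivative_continuous)
    then have "(\<gamma> \<longlongrightarrow> \<gamma> e) (at e within I)"
      unfolding continuous_within[symmetric] by (rule continuous_at_imp_continuous_at_within)
    then have "((\<lambda>t. fst (\<gamma> t)) \<longlongrightarrow> fst (\<gamma> e)) (at e within I)"
      by (rule tendsto_fst)
    moreover have "eventually (\<lambda>t. fst (\<gamma> t) = fst (\<sigma> t)) (at e within I)"
      using eq by (auto simp: eventually_at_filter)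
    ultimately have bounded: "((\<lambda>t. fst (\<sigma> t)) \<longlongrightarrow> fst (\<gamma> e)) (at e within I)"
      by (rule Lim_transform_eventually)
    have "e islimpt I"
      using e(2) \<open>open I\<close> by (auto simp: frontier_def interior_open closure_def)
    then have "at e within I \<noteq> bot" by (simp add: trivial_limit_within)
    moreover have "filterlim (\<lambda>t. fst (\<sigma> t)) at_infinity (at e within I)"
      using blowup e(2) by (simp add: filterlim_at_top_imp_at_infinity)
    ultimately show False
      using bounded by (intro not_tendsto_and_filterlim_at_infinity)
  qed
qed

lemma maximal_geodesic_greaterThan:
  assumes "is_geodesic {0<..} \<sigma>" "filterlim (\<lambda>t. fst (\<sigma> t)) at_top (at_right 0)"
  shows "maximal_geodesic {0<..} \<sigma>"
  using assms by (intro maximal_geodesic_if_frontier_blowup) auto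

lemma maximal_geodesic_greaterThanLessThan:
  assumes "is_geodesic {0<..<pi} \<sigma>" "filterlim (\<lambda>t. fst (\<sigma> t)) at_top (at_right 0)"
    "filterlim (\<lambda>t. fst (\<sigma> t)) at_top (at_left pi)"
  shows "maximal_geodesic {0<..<pi} \<sigma>"
proof (rule maximal_geodesic_if_frontier_blowup[OF assms(1)])
  have "frontier {0<..<pi} = {0, pi}"
    using frontier_box[of 0 pi] pi_gt_zero by (auto simp: box_real)
  then show "\<forall>e\<in>frontier {0<..<pi}. filterlim (\<lambda>t. fst (\<sigma> t)) at_top (at e within {0<..<pi})"
    using assms(2,3) by (auto intro: filterlim_mono[OF _ order_refl at_le])
qed

lemma emeasure_lborel_greaterThan: "emeasure lborel {a :: real <..} = \<infinity>"
proof (rule ccontr)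
  assume "emeasure lborel {a<..} \<noteq> \<infinity>"
  then obtain r where r: "emeasure lborel {a<..} = ennreal r" "r \<ge> 0"
    by (cases "emeasure lborel {a<..}") auto
  have "emeasure lborel {a<..<a + r + 1} \<le> emeasure lborel {a<..}" by (rule emeasure_mono) auto
  then show False using r by (simp add: ennreal_le_iff)
qed

lemma sigma2_eq_recip_point: "s \<in> {-1, 1} \<Longrightarrow> sigma2 s \<alpha> = (\<lambda>t. recip_point (- s) \<alpha> t 1)"
  by (auto simp: recip_point_affine)

lemma reciprocal_ode_sigma2: "s \<in> {-1, 1} \<Longrightarrow> reciprocal_ode {0<..} 0 (- s) (\<lambda>t. t) (\<lambda>t. 1)"
  by (auto simp: reciprocal_ode_def intro!: derivative_eq_intros)

lemma sigma3_eq_recip_point: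
  "s \<in> {-1, 1} \<Longrightarrow> c > 0 \<Longrightarrow>
     sigma3 s c \<beta> = (\<lambda>t. recip_point (- (s * c)) \<beta> (c * sinh t) (c * cosh t))"
  using recip_point_sinh[of "- (s * c)" \<beta> c _ 1] by auto

lemma reciprocal_ode_sigma3:
  assumes "s \<in> {-1, 1}" "c > 0"
  shows "reciprocal_ode {0<..} (- 1) (- (s * c)) (\<lambda>t. c * sinh t) (\<lambda>t. c * cosh t)"
  using assms
  by (auto simp: reciprocal_ode_def power_mult_distrib cosh_square_eq algebra_simps
           intro!: derivative_eq_intros)

lemma sigma4_eq_recip_point:
  "s \<in> {-1, 1} \<Longrightarrow> c > 0 \<Longrightarrow>
     sigma4 s c \<beta> = (\<lambda>t. recip_point (- (s * c)) \<beta> (c * sin t) (c * cos t))"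
  using recip_point_sin[of "- (s * c)" \<beta> c _ 1] by auto

lemma reciprocal_ode_sigma4:
  assumes "s \<in> {-1, 1}" "c > 0"
  shows "reciprocal_ode {0<..<pi} 1 (- (s * c)) (\<lambda>t. c * sin t) (\<lambda>t. c * cos t)"
  using assms
  by (auto simp: reciprocal_ode_def power_mult_distrib sin_gt_zero simp flip: distrib_left
           intro!: derivative_eq_intros)

lemma sigma1_maximal_complete: "maximal_geodesic UNIV (sigma1 \<alpha>) \<and> complete_at_bot UNIV \<and> complete_at_top UNIV"
proof -
  have "geodesic_ode UNIV exp (\<lambda>_. \<alpha>) exp (\<lambda>_. 0)"
    unfolding geodesic_ode_def by (auto intro!: derivative_eq_intros simp: power2_eq_square)
  then have "is_geodesic UNIV (sigma1 \<alpha>)"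
    unfolding is_geodesic_iff_geodesic_ode sigma1_def by auto
  then have "maximal_geodesic UNIV (sigma1 \<alpha>)" by (rule maximal_geodesic_if_frontier_blowup) simp
  moreover have "complete_at_bot (UNIV :: real set)" "complete_at_top (UNIV :: real set)"
    unfolding complete_at_bot_def complete_at_top_def by (meson UNIV_I order_refl)+
  ultimately show ?thesis by blast
qed

lemma complete_greaterThan_zero: "\<not> complete_at_bot {0 :: real <..} \<and> complete_at_top {0 :: real <..}"
  unfolding complete_at_bot_def complete_at_top_def
proof (intro conjI allI notI)
  show "\<exists>t\<in>{0<..}. t \<ge> T" for T :: real by (intro bexI[of _ "max T 1"]) auto
qed (auto dest: spec[of _ 0])

lemma sigma2_maximal:
  assumes "s \<in> {-1, 1}"
  shows "maximal_geodesic {0<..} (sigma2 s \<alpha>) \<and> \<not> complete_at_bot {0<..} \<and> complete_at_top {0<..}"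
proof -
  have "is_geodesic {0<..} (sigma2 s \<alpha>)"
    unfolding sigma2_eq_recip_point[OF assms]
    by (rule reciprocal_ode_recip_point_geodesic[OF reciprocal_ode_sigma2[OF assms]])
       (use assms in \<open>auto simp: is_interval_1\<close>)
  moreover have "filterlim (\<lambda>t. fst (sigma2 s \<alpha> t)) at_top (at_right 0)"
    unfolding sigma2_def by simp real_asymp
  ultimately show ?thesis using maximal_geodesic_greaterThan complete_greaterThan_zero by blast
qed

lemma sigma3_maximal_asymptotics_length:
  assumes "s \<in> {-1, 1}" "c > 0"
  shows "maximal_geodesic {0<..} (sigma3 s c \<beta>) \<and>
        \<not> complete_at_bot {0<..} \<and> complete_at_top {0<..} \<and>
        ((\<lambda>t. fst (sigma3 s c \<beta> t)) \<longlongrightarrow> 0) at_top \<and>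
        filterlim (\<lambda>t. fst (sigma3 s c \<beta> t)) at_top (at_right 0) \<and>
        (\<forall>t>0. len_density (sigma3 s c \<beta>) t < 0) \<and>
        (\<integral>\<^sup>+ t. ennreal (- len_density (sigma3 s c \<beta>) t) * indicator {0<..} t \<partial>lborel) = \<infinity>"
proof -
  note rec = reciprocal_ode_sigma3[OF assms]
  have K: "- (s * c) \<noteq> 0" using assms by auto
  have geo: "is_geodesic {0<..} (sigma3 s c \<beta>)"
    unfolding sigma3_eq_recip_point[OF assms]
    by (rule reciprocal_ode_recip_point_geodesic[OF rec K]) (use assms in \<open>auto simp: is_interval_1\<close>)
  have len: "len_density (sigma3 s c \<beta>) t = - 1" if "t > 0" for t
    using reciprocal_ode_len_density[OF rec K that[folded greaterThan_iff]]
    unfolding sigma3_eq_recip_point[OF assms] by simp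
  have blowup: "filterlim (\<lambda>t. fst (sigma3 s c \<beta> t)) at_top (at_right 0)"
    unfolding sigma3_def using assms(2) by simp real_asymp
  have "((\<lambda>t. fst (sigma3 s c \<beta> t)) \<longlongrightarrow> 0) at_top"
    unfolding sigma3_def using assms(2) by simp real_asymp
  moreover have "(\<integral>\<^sup>+ t. ennreal (- len_density (sigma3 s c \<beta>) t) * indicator {0<..} t \<partial>lborel) =
      (\<integral>\<^sup>+ t. indicator {0<..} (t :: real) \<partial>lborel)"
    by (rule nn_integral_cong) (auto simp: len indicator_def)
  ultimately show ?thesis
    using maximal_geodesic_greaterThan[OF geo blowup] complete_greaterThan_zero blowup len
    by (simp add: emeasure_lborel_greaterThan)
qed

lemma sigma4_maximal_asymptotics_length:
  assumes "s \<in> {-1, 1}" "c > 0"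
  shows "maximal_geodesic {0<..<pi} (sigma4 s c \<beta>) \<and>
        \<not> complete_at_bot {0<..<pi} \<and> \<not> complete_at_top {0<..<pi} \<and>
        filterlim (\<lambda>t. fst (sigma4 s c \<beta> t)) at_top (at_right 0) \<and>
        filterlim (\<lambda>t. s * snd (sigma4 s c \<beta> t)) at_top (at_right 0) \<and>
        filterlim (\<lambda>t. fst (sigma4 s c \<beta> t)) at_top (at_left pi) \<and>
        filterlim (\<lambda>t. s * snd (sigma4 s c \<beta> t)) at_bot (at_left pi) \<and>
        (len_density (sigma4 s c \<beta>) has_integral pi) {0<..<pi}"
proof -
  note rec = reciprocal_ode_sigma4[OF assms]
  have K: "- (s * c) \<noteq> 0" using assms by auto
  have geo: "is_geodesic {0<..<pi} (sigma4 s c \<beta>)"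
    unfolding sigma4_eq_recip_point[OF assms]
    by (rule reciprocal_ode_recip_point_geodesic[OF rec K]) (auto simp: is_interval_1 linorder_not_le)
  have len: "len_density (sigma4 s c \<beta>) t = 1" if "t \<in> {0<..<pi}" for t
    using reciprocal_ode_len_density[OF rec K that]
    unfolding sigma4_eq_recip_point[OF assms] by simp
  have l0: "filterlim (\<lambda>t. fst (sigma4 s c \<beta> t)) at_top (at_right 0)"
    and lpi: "filterlim (\<lambda>t. fst (sigma4 s c \<beta> t)) at_top (at_left pi)"
    unfolding sigma4_def using assms(2) by (simp, real_asymp)+
  have snd: "(\<lambda>t. s * snd (sigma4 s c \<beta> t)) = (\<lambda>t. cos t / sin t / c + s * \<beta>)"
    using assms(1) by (auto simp: sigma4_def cot_def algebra_simps)
  have "filterlim (\<lambda>t. s * snd (sigma4 s c \<beta> t)) at_top (at_right 0)"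
    "filterlim (\<lambda>t. s * snd (sigma4 s c \<beta> t)) at_bot (at_left pi)"
    unfolding snd using assms(2) by real_asymp+
  moreover have "((\<lambda>_. 1) has_integral pi) {0<..<pi}"
    using has_integral_const_real[of "1 :: real" 0 pi]
      has_integral_open_interval[of "\<lambda>_. 1 :: real" pi 0 pi]
    by (simp add: box_real)
  then have "(len_density (sigma4 s c \<beta>) has_integral pi) {0<..<pi}"
    by (rule has_integral_cong[THEN iffD1, rotated]) (simp add: len)
  moreover have "\<not> complete_at_bot {0<..<pi}" unfolding complete_at_bot_def by (auto intro!: exI[of _ 0])
  moreover have "\<not> complete_at_top {0<..<pi}" unfolding complete_at_top_def by (auto intro!: exI[of _ pi])
  ultimately show ?thesis
    using maximal_geodesic_greaterThanLessThan[OF geo l0 lpi] l0 lpi by blast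
qed

lemma sigma3_sigma4_hyperbolas:
  assumes "s \<in> {-1, 1}" "c > 0"
  shows "(\<exists>\<beta>'. \<forall>t>0. (fst (sigma3 s c \<beta> t))\<^sup>2 - (-1) / c\<^sup>2 = (snd (sigma3 s c \<beta> t) + \<beta>')\<^sup>2) \<and>
         (\<exists>\<beta>'. \<forall>t\<in>{0<..<pi}. (fst (sigma4 s c \<beta> t))\<^sup>2 - 1 / c\<^sup>2 = (snd (sigma4 s c \<beta> t) + \<beta>')\<^sup>2)"
proof -
  have K: "- (s * c) \<noteq> 0" "(- (s * c))\<^sup>2 = c\<^sup>2" using assms by auto
  show ?thesis
    using reciprocal_ode_conic[OF reciprocal_ode_sigma3[OF assms] K(1), of _ \<beta>]
      reciprocal_ode_conic[OF reciprocal_ode_sigma4[OF assms] K(1), of _ \<beta>]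
    unfolding sigma3_eq_recip_point[OF assms] sigma4_eq_recip_point[OF assms] K(2)
    by (intro conjI exI[of _ "- \<beta>"]) auto
qed

lemma sigma2_null:
  assumes "s \<in> {-1, 1}"
  shows "(\<forall>t>0. metric_g (sigma2 s \<alpha> t) (vector_derivative (sigma2 s \<alpha>) (at t))
                 (vector_derivative (sigma2 s \<alpha>) (at t)) = 0) \<and>
         (\<exists>\<beta>'. \<forall>t>0. (fst (sigma2 s \<alpha> t))\<^sup>2 - 0 = (snd (sigma2 s \<alpha> t) + \<beta>')\<^sup>2)"
proof -
  have K: "- s \<noteq> 0" using assms by auto
  show ?thesis
    using reciprocal_ode_recip_point_energy[OF reciprocal_ode_sigma2[OF assms] K _ sigma2_eq_recip_point[OF assms]]
      reciprocal_ode_conic[OF reciprocal_ode_sigma2[OF assms] K, of _ \<alpha>]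
    unfolding sigma2_eq_recip_point[OF assms] by (intro conjI exI[of _ "- \<alpha>"]) auto
qed

theorem theorem4p1:
  shows "(\<forall>I \<gamma>. is_geodesic I \<gamma> \<and> (\<exists>s\<in>I. \<exists>t\<in>I. \<gamma> s \<noteq> \<gamma> t) \<longrightarrow>
           (\<exists>a b. a \<noteq> 0 \<and>
              ((\<exists>\<alpha>. \<forall>t\<in>I. \<gamma> t = sigma1 \<alpha> (a * t + b)) \<or>
               (\<exists>s \<alpha>. s \<in> {-1, 1} \<and> (\<forall>t\<in>I. 0 < a * t + b \<and> \<gamma> t = sigma2 s \<alpha> (a * t + b))) \<or>
               (\<exists>s c \<beta>. s \<in> {-1, 1} \<and> c > 0 \<and>
                  (\<forall>t\<in>I. 0 < a * t + b \<and> \<gamma> t = sigma3 s c \<beta> (a * t + b))) \<or>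
               (\<exists>s c \<beta>. s \<in> {-1, 1} \<and> c > 0 \<and>
                  (\<forall>t\<in>I. 0 < a * t + b \<and> a * t + b < pi \<and> \<gamma> t = sigma4 s c \<beta> (a * t + b))))))
   \<and> (\<forall>\<alpha>. maximal_geodesic UNIV (sigma1 \<alpha>) \<and> complete_at_bot UNIV \<and> complete_at_top UNIV)
   \<and> (\<forall>s \<alpha>. s \<in> {-1, 1} \<longrightarrow>
        maximal_geodesic {0<..} (sigma2 s \<alpha>) \<and>
        \<not> complete_at_bot {0<..} \<and> complete_at_top {0<..})
   \<and> (\<forall>s c \<beta>. s \<in> {-1, 1} \<and> c > 0 \<longrightarrow>
        maximal_geodesic {0<..} (sigma3 s c \<beta>) \<and>
        \<not> complete_at_bot {0<..} \<and> complete_at_top {0<..} \<and>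
        ((\<lambda>t. fst (sigma3 s c \<beta> t)) \<longlongrightarrow> 0) at_top \<and>
        filterlim (\<lambda>t. fst (sigma3 s c \<beta> t)) at_top (at_right 0) \<and>
        (\<forall>t>0. len_density (sigma3 s c \<beta>) t < 0) \<and>
        (\<integral>\<^sup>+ t. ennreal (- len_density (sigma3 s c \<beta>) t) * indicator {0<..} t \<partial>lborel) = \<infinity>)
   \<and> (\<forall>s c \<beta>. s \<in> {-1, 1} \<and> c > 0 \<longrightarrow>
        maximal_geodesic {0<..<pi} (sigma4 s c \<beta>) \<and>
        \<not> complete_at_bot {0<..<pi} \<and> \<not> complete_at_top {0<..<pi} \<and>
        filterlim (\<lambda>t. fst (sigma4 s c \<beta> t)) at_top (at_right 0) \<and>
        filterlim (\<lambda>t. s * snd (sigma4 s c \<beta> t)) at_top (at_right 0) \<and>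
        filterlim (\<lambda>t. fst (sigma4 s c \<beta> t)) at_top (at_left pi) \<and>
        filterlim (\<lambda>t. s * snd (sigma4 s c \<beta> t)) at_bot (at_left pi) \<and>
        (len_density (sigma4 s c \<beta>) has_integral pi) {0<..<pi})
   \<and> (\<forall>s c \<beta>. s \<in> {-1, 1} \<and> c > 0 \<longrightarrow>
        (\<exists>\<beta>'. \<forall>t>0. (fst (sigma3 s c \<beta> t))\<^sup>2 - (-1) / c\<^sup>2 = (snd (sigma3 s c \<beta> t) + \<beta>')\<^sup>2) \<and>
        (\<exists>\<beta>'. \<forall>t\<in>{0<..<pi}. (fst (sigma4 s c \<beta> t))\<^sup>2 - 1 / c\<^sup>2 = (snd (sigma4 s c \<beta> t) + \<beta>')\<^sup>2))
   \<and> (\<forall>s \<alpha>. s \<in> {-1, 1} \<longrightarrow>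
        (\<forall>t>0. metric_g (sigma2 s \<alpha> t) (vector_derivative (sigma2 s \<alpha>) (at t))
                 (vector_derivative (sigma2 s \<alpha>) (at t)) = 0) \<and>
        (\<exists>\<beta>'. \<forall>t>0. (fst (sigma2 s \<alpha> t))\<^sup>2 - 0 = (snd (sigma2 s \<alpha> t) + \<beta>')\<^sup>2))"
  unfolding model_reparametrization_def[symmetric]
  apply (intro conjI)
  subgoal using is_geodesic_classification by blast
  subgoal using sigma1_maximal_complete by blast
  subgoal using sigma2_maximal by blast
  subgoal using sigma3_maximal_asymptotics_length by blast
  subgoal using sigma4_maximal_asymptotics_length by blast
  subgoal using sigma3_sigma4_hyperbolas by blast
  subgoal using sigma2_null by blast
  done

end
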